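(* Let $r\ge 2$ and consider the $\mathfrak{q}(2)$-crystal $\mathbf{B}^{\otimes r}$. Then the $\mathfrak{q}(2)$-connected component $C(1^r)$ of $1^r=1\otimes\cdots\otimes 1$ decomposes, as $\mathfrak{gl}_2$-crystals, as $$C(1^r)=C_{\mathfrak{gl}_2}(1^r)\sqcup C_{\mathfrak{gl}_2}(1^{r-1}2)\cong C_{\mathfrak{gl}_2}(1^{r-1})\otimes \mathbf{B}_{\mathfrak{gl}_2},$$ where $C_{\mathfrak{gl}_2}(1^{r-1})$ is the $\mathfrak{gl}_2$-connected component of $1^{r-1}$ in $\mathbf{B}^{\otimes (r-1)}$, $\mathbf B_{\mathfrak{gl}_2}$ is $\mathbf B$ regarded as a $\mathfrak{gl}_2$-crystal, and $\otimes$ on the right is the tensor product of $\mathfrak{gl}_2$-crystals.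
   Context: Let $P=\mathbb Z e_1\oplus\mathbb Z e_2$, $\alpha_1=e_1-e_2$, and $(k_1,k_2)$ the dual basis of $P^*$ with pairing $\langle\,,\rangle$. A $\mathfrak{gl}_2$-crystal is a set $B$ with maps $\tilde e,\tilde f:B\to B\sqcup\{0\}$, $\varphi,\varepsilon:B\to\mathbb Z\sqcup\{-\infty\}$, $\mathrm{wt}:B\to P$ such that: $\mathrm{wt}(\tilde e b)=\mathrm{wt}(b)+\alpha_1$ if $\tilde eb\ne0$; $\mathrm{wt}(\tilde f b)=\mathrm{wt}(b)-\alpha_1$ if $\tilde fb\neq 0$; $\varphi(b)=\varepsilon(b)+\langle k_1-k_2,\mathrm{wt}(b)\rangle$; $\tilde f b=b'$ iff $b=\tilde e b'$; if $\tilde e b\ne 0$ then $\varepsilon(\tilde eb)=\varepsilon(b)-1$, $\varphi(\tilde e b)=\varphi(b)+1$; if $\tilde fb\ne0$ then $\varepsilon(\tilde fb)=\varepsilon(b)+1$, $\varphi(\tilde fb)=\varphi(b)-1$; if $\varphi(b)=-\infty$ then $\tilde eb=\tilde fb=0$. A $\mathfrak q(2)$-crystal is a $\mathfrak{gl}_2$-crystal with extra maps $\tilde e_{\bar1},\tilde f_{\bar1}:B\to B\sqcup\{0\}$ such that $\mathrm{wt}(B)\subset \mathbb Z_{\ge0}e_1\oplus\mathbb Z_{\ge0}e_2$, $\mathrm{wt}(\tilde e_{\bar1}b)=\mathrm{wt}(b)+\alpha_1$, $\mathrm{wt}(\tilde f_{\bar1}b)=\mathrm{wt}(b)-\alpha_1$,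 and $\tilde f_{\bar1}b=b'$ iff $b=\tilde e_{\bar1}b'$. The tensor product $B_1\otimes B_2$ of $\mathfrak q(2)$-crystals is the set $B_1\times B_2$ with $\mathrm{wt}(b_1\otimes b_2)=\mathrm{wt}(b_1)+\mathrm{wt}(b_2)$, $\varepsilon(b_1\otimes b_2)=\max\{\varepsilon(b_1)-\varphi(b_1)+\varepsilon(b_2),\varepsilon(b_1)\}$, $\varphi(b_1\otimes b_2)=\max\{\varphi(b_1)-\varepsilon(b_2)+\varphi(b_2),\varphi(b_2)\}$, $\tilde e(b_1\otimes b_2)=\tilde eb_1\otimes b_2$ if $\varphi(b_1)\ge\varepsilon(b_2)$ and $=b_1\otimes\tilde e b_2$ otherwise; $\tilde f(b_1\otimes b_2)=\tilde fb_1\otimes b_2$ if $\varphi(b_1)>\varepsilon(b_2)$ and $=b_1\otimes \tilde fb_2$ otherwise; $\tilde e_{\bar1}(b_1\otimes b_2)=\tilde e_{\bar1}b_1\otimes b_2$ and $\tilde f_{\bar1}(b_1\otimes b_2)=\tilde f_{\bar1}b_1\otimes b_2$ if $\langle k_1,\mathrm{wt}(b_2)\rangle=\langle k_2,\mathrm{wt}(b_2)\rangle=0$, and otherwise they act on $b_2$ (with $x\otimes 0=0\otimes x=0$). The tensor product of $\mathfrak{gl}_2$-crystals is given by the same formulas for $\mathrm{wt},\varepsilon,\varphi,\tilde e,\tilde f$. Let $\mathbf B=\{1,2\}$ with $\mathrm{wt}(1)=e_1$, $\mathrm{wt}(2)=e_2$, $\tilde f(1)=2$, $\tilde e(2)=1$,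 $\tilde e(1)=\tilde f(2)=0$, $\varepsilon(1)=0,\varphi(1)=1,\varepsilon(2)=1,\varphi(2)=0$, $\tilde f_{\bar1}(1)=2$, $\tilde e_{\bar1}(2)=1$, $\tilde e_{\bar 1}(1)=\tilde f_{\bar1}(2)=0$. Elements $a_1\otimes\cdots\otimes a_r$ of $\mathbf B^{\otimes r}$ are written as words $a_1\cdots a_r$; $1^r$ denotes $r$ letters $1$, and $1^{r-1}2$ is the word with $r-1$ ones followed by a $2$. For $b$ in a $\mathfrak q(2)$-crystal, $C(b)$ is the connected component of $b$ in the graph with edges $b\to\tilde f b$ and $b\to\tilde f_{\bar1}b$; $C_{\mathfrak{gl}_2}(b)$ is the connected component using only edges $b\to \tilde fb$. *)

theory Defs
  imports Main
begin

text \<open>Weight lattice P = Z e1 + Z e2 is modelled as int \<times> int; the pairing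
  with k1 - k2 is fst - snd, and k1(w) = k2(w) = 0 means w = (0,0).
  The value -\<infinity> of phi/eps never occurs in the crystals considered here
  (B and its tensor powers), so phi, eps are int-valued.
  The value 0 of the Kashiwara operators is modelled by None.\<close>

record 'a gl2crys =
  carrier :: "'a set"
  wt :: "'a \<Rightarrow> int \<times> int"
  eps :: "'a \<Rightarrow> int"
  phi :: "'a \<Rightarrow> int"
  ce :: "'a \<Rightarrow> 'a option"
  cf :: "'a \<Rightarrow> 'a option"

record 'a q2crys = "'a gl2crys" +
  ce1 :: "'a \<Rightarrow> 'a option"
  cf1 :: "'a \<Rightarrow> 'a option"

definition wt_add :: "int \<times> int \<Rightarrow> int \<times> int \<Rightarrow> int \<times> int" where
  "wt_add u v = (fst u + fst v, snd u + snd v)"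

definition Bq :: "nat q2crys" where
  "Bq = \<lparr> carrier = {1, 2},
          wt = (\<lambda>b. if b = 1 then (1, 0) else (0, 1)),
          eps = (\<lambda>b. if b = 1 then 0 else 1),
          phi = (\<lambda>b. if b = 1 then 1 else 0),
          ce = (\<lambda>b. if b = 2 then Some 1 else None),
          cf = (\<lambda>b. if b = 1 then Some 2 else None),
          ce1 = (\<lambda>b. if b = 2 then Some 1 else None),
          cf1 = (\<lambda>b. if b = 1 then Some 2 else None) \<rparr>"

definition Bgl2 :: "nat gl2crys" where
  "Bgl2 = gl2crys.truncate Bq"

definition gl2_tensor :: "('a, 'x) gl2crys_scheme \<Rightarrow> ('b, 'y) gl2crys_scheme \<Rightarrow> ('a \<times> 'b) gl2crys" where
  "gl2_tensor B1 B2 = \<lparr>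
     carrier = carrier B1 \<times> carrier B2,
     wt = (\<lambda>(b1, b2). wt_add (wt B1 b1) (wt B2 b2)),
     eps = (\<lambda>(b1, b2). max (eps B1 b1 - phi B1 b1 + eps B2 b2) (eps B1 b1)),
     phi = (\<lambda>(b1, b2). max (phi B1 b1 - eps B2 b2 + phi B2 b2) (phi B2 b2)),
     ce = (\<lambda>(b1, b2). if phi B1 b1 \<ge> eps B2 b2
                       then map_option (\<lambda>x. (x, b2)) (ce B1 b1)
                       else map_option (\<lambda>y. (b1, y)) (ce B2 b2)),
     cf = (\<lambda>(b1, b2). if phi B1 b1 > eps B2 b2
                       then map_option (\<lambda>x. (x, b2)) (cf B1 b1)
                       else map_option (\<lambda>y. (b1, y)) (cf B2 b2)) \<rparr>"

text \<open>Tensor product of q(2)-crystals B1 \<otimes> B2, where B2 has words (lists) as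
  elements; the element b1 \<otimes> w is encoded as the word b1 # w.\<close>
definition q2_tensor_cons :: "'a q2crys \<Rightarrow> 'a list q2crys \<Rightarrow> 'a list q2crys" where
  "q2_tensor_cons B1 B2 = \<lparr>
     carrier = {b1 # w | b1 w. b1 \<in> carrier B1 \<and> w \<in> carrier B2},
     wt = (\<lambda>v. wt_add (wt B1 (hd v)) (wt B2 (tl v))),
     eps = (\<lambda>v. max (eps B1 (hd v) - phi B1 (hd v) + eps B2 (tl v)) (eps B1 (hd v))),
     phi = (\<lambda>v. max (phi B1 (hd v) - eps B2 (tl v) + phi B2 (tl v)) (phi B2 (tl v))),
     ce = (\<lambda>v. if phi B1 (hd v) \<ge> eps B2 (tl v)
                 then map_option (\<lambda>x. x # tl v) (ce B1 (hd v))
                 else map_option (\<lambda>y. hd v # y) (ce B2 (tl v))),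
     cf = (\<lambda>v. if phi B1 (hd v) > eps B2 (tl v)
                 then map_option (\<lambda>x. x # tl v) (cf B1 (hd v))
                 else map_option (\<lambda>y. hd v # y) (cf B2 (tl v))),
     ce1 = (\<lambda>v. if wt B2 (tl v) = (0, 0)
                 then map_option (\<lambda>x. x # tl v) (ce1 B1 (hd v))
                 else map_option (\<lambda>y. hd v # y) (ce1 B2 (tl v))),
     cf1 = (\<lambda>v. if wt B2 (tl v) = (0, 0)
                 then map_option (\<lambda>x. x # tl v) (cf1 B1 (hd v))
                 else map_option (\<lambda>y. hd v # y) (cf1 B2 (tl v))) \<rparr>"

definition unit_crys :: "'a list q2crys" where
  "unit_crys = \<lparr> carrier = {[]}, wt = (\<lambda>_. (0, 0)), eps = (\<lambda>_. 0), phi = (\<lambda>_. 0),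
                 ce = (\<lambda>_. None), cf = (\<lambda>_. None), ce1 = (\<lambda>_. None), cf1 = (\<lambda>_. None) \<rparr>"

fun Bpow :: "nat \<Rightarrow> nat list q2crys" where
  "Bpow 0 = unit_crys"
| "Bpow (Suc r) = q2_tensor_cons Bq (Bpow r)"

definition q2_edges :: "('a, 'x) q2crys_scheme \<Rightarrow> ('a \<times> 'a) set" where
  "q2_edges C = {(b, b'). b \<in> carrier C \<and> (cf C b = Some b' \<or> cf1 C b = Some b')}"

definition gl2_edges :: "('a, 'x) gl2crys_scheme \<Rightarrow> ('a \<times> 'a) set" where
  "gl2_edges C = {(b, b'). b \<in> carrier C \<and> cf C b = Some b'}"

definition q2_comp :: "('a, 'x) q2crys_scheme \<Rightarrow> 'a \<Rightarrow> 'a set" where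
  "q2_comp C b = {b'. (b, b') \<in> (q2_edges C \<union> (q2_edges C)\<inverse>)\<^sup>*}"

definition gl2_comp :: "('a, 'x) gl2crys_scheme \<Rightarrow> 'a \<Rightarrow> 'a set" where
  "gl2_comp C b = {b'. (b, b') \<in> (gl2_edges C \<union> (gl2_edges C)\<inverse>)\<^sup>*}"

definition gl2_restrict :: "('a, 'x) gl2crys_scheme \<Rightarrow> 'a set \<Rightarrow> 'a gl2crys" where
  "gl2_restrict C S = (gl2crys.truncate C)\<lparr>carrier := S\<rparr>"

definition gl2_iso :: "('a, 'x) gl2crys_scheme \<Rightarrow> ('b, 'y) gl2crys_scheme \<Rightarrow> ('a \<Rightarrow> 'b) \<Rightarrow> bool" where
  "gl2_iso C1 C2 \<psi> \<longleftrightarrow> bij_betw \<psi> (carrier C1) (carrier C2) \<and>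
     (\<forall>b \<in> carrier C1. wt C2 (\<psi> b) = wt C1 b \<and> eps C2 (\<psi> b) = eps C1 b \<and>
        phi C2 (\<psi> b) = phi C1 b \<and> ce C2 (\<psi> b) = map_option \<psi> (ce C1 b) \<and>
        cf C2 (\<psi> b) = map_option \<psi> (cf C1 b))"

end

theory Submission
  imports Defs
begin

text \<open>Appending a letter realises B^(n+1) as the gl2-tensor product B^n \<otimes> B, because the
  tensor rule for eps, phi, e, f is associative; and the odd operator f1 acts on a word only by
  turning a final letter 1 into 2, since every nonempty suffix has nonzero weight. The
  gl2-component of 1^n is the string of words 2^k 1^(n-k). Hence the words x c, with x in the
  string of length r-1 and c a letter, form a set that contains 1^r and is closed under all crystal
  operators and their inverses: it is C(1^r), and w \<mapsto> (butlast w, last w) identifies it with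
  C_gl2(1^(r-1)) \<otimes> B. The set consists of the string through 1^r and the string of words
  2^k 1^(r-1-k) 2 (k < r-1) through 1^(r-1) 2; these are different gl2-components because
  1^(r-1) 2 is not of the form 2^k 1^m.\<close>

lemma Bq_simps [simp]:
  "carrier Bq = {1, 2}"
  "wt Bq b = (if b = 1 then (1, 0) else (0, 1))"
  "eps Bq b = (if b = 1 then 0 else 1)"
  "phi Bq b = (if b = 1 then 1 else 0)"
  "ce Bq b = (if b = 2 then Some 1 else None)"
  "cf Bq b = (if b = 1 then Some 2 else None)"
  "cf1 Bq b = (if b = 1 then Some 2 else None)"
  by (simp_all add: Bq_def)

lemma Bpow_0_simps [simp]:
  "carrier (Bpow 0) = {[]}" "wt (Bpow 0) v = (0, 0)" "eps (Bpow 0) v = 0" "phi (Bpow 0) v = 0"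
  "ce (Bpow 0) v = None" "cf (Bpow 0) v = None" "cf1 (Bpow 0) v = None"
  by (simp_all add: unit_crys_def)

lemma Bpow_Suc_simps [simp]:
  "carrier (Bpow (Suc n)) = {b # w | b w. b \<in> carrier Bq \<and> w \<in> carrier (Bpow n)}"
  "wt (Bpow (Suc n)) (b # w) = wt_add (wt Bq b) (wt (Bpow n) w)"
  "eps (Bpow (Suc n)) (b # w) = max (eps Bq b - phi Bq b + eps (Bpow n) w) (eps Bq b)"
  "phi (Bpow (Suc n)) (b # w) = max (phi Bq b - eps (Bpow n) w + phi (Bpow n) w) (phi (Bpow n) w)"
  "ce (Bpow (Suc n)) (b # w) = (if phi Bq b \<ge> eps (Bpow n) w
                 then map_option (\<lambda>x. x # w) (ce Bq b)
                 else map_option (\<lambda>y. b # y) (ce (Bpow n) w))"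
  "cf (Bpow (Suc n)) (b # w) = (if phi Bq b > eps (Bpow n) w
                 then map_option (\<lambda>x. x # w) (cf Bq b)
                 else map_option (\<lambda>y. b # y) (cf (Bpow n) w))"
  "cf1 (Bpow (Suc n)) (b # w) = (if wt (Bpow n) w = (0, 0)
                 then map_option (\<lambda>x. x # w) (cf1 Bq b)
                 else map_option (\<lambda>y. b # y) (cf1 (Bpow n) w))"
  by (simp_all add: q2_tensor_cons_def del: Bq_simps)

declare Bpow.simps [simp del]

text \<open>eps, phi and the choice of the factor on which e (resp. f) acts agree for
  b1 \<otimes> (b2 \<otimes> b3) and (b1 \<otimes> b2) \<otimes> b3.\<close>

lemma signature_rule_assoc:
  fixes e1 p1 e2 p2 e3 p3 :: int
  shows "max (e1 - p1 + max (e2 - p2 + e3) e2) e1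
           = max (max (e1 - p1 + e2) e1 - max (p1 - e2 + p2) p2 + e3) (max (e1 - p1 + e2) e1)"
    and "max (p1 - max (e2 - p2 + e3) e2 + max (p2 - e3 + p3) p3) (max (p2 - e3 + p3) p3)
           = max (max (p1 - e2 + p2) p2 - e3 + p3) p3"
    and "(if max (e2 - p2 + e3) e2 \<le> p1 then x else if e3 \<le> p2 then y else z)
           = (if e3 \<le> max (p1 - e2 + p2) p2 then if e2 \<le> p1 then x else y else z)"
    and "(if max (e2 - p2 + e3) e2 < p1 then x else if e3 < p2 then y else z)
           = (if e3 < max (p1 - e2 + p2) p2 then if e2 < p1 then x else y else z)"
  by (auto split: if_splits)

lemma Bpow_snoc:
  assumes "length y = n"
  shows "wt (Bpow (Suc n)) (y @ [b]) = wt_add (wt (Bpow n) y) (wt Bq b)"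
    and "eps (Bpow (Suc n)) (y @ [b])
           = max (eps (Bpow n) y - phi (Bpow n) y + eps Bq b) (eps (Bpow n) y)"
    and "phi (Bpow (Suc n)) (y @ [b]) = max (phi (Bpow n) y - eps Bq b + phi Bq b) (phi Bq b)"
    and "ce (Bpow (Suc n)) (y @ [b]) = (if phi (Bpow n) y \<ge> eps Bq b
                then map_option (\<lambda>x. x @ [b]) (ce (Bpow n) y)
                else map_option (\<lambda>c. y @ [c]) (ce Bq b))"
    and "cf (Bpow (Suc n)) (y @ [b]) = (if phi (Bpow n) y > eps Bq b
                then map_option (\<lambda>x. x @ [b]) (cf (Bpow n) y)
                else map_option (\<lambda>c. y @ [c]) (cf Bq b))"
  unfolding assms[symmetric]
  by (induction y) (simp_all add: wt_add_def signature_rule_assoc if_distrib[of "map_option _"]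
      option.map_comp o_def del: Bq_simps, simp_all add: wt_add_def)

lemma carrier_Bpow: "carrier (Bpow n) = {w. length w = n \<and> set w \<subseteq> {1, 2}}"
  by (induction n) (auto simp: length_Suc_conv)

lemma wt_Bpow_total: "length w = n \<Longrightarrow> fst (wt (Bpow n) w) + snd (wt (Bpow n) w) = int n"
  by (induction w arbitrary: n) (auto simp: wt_add_def)

lemma cf1_Bpow_snoc:
  "length y = n \<Longrightarrow> cf1 (Bpow (Suc n)) (y @ [b]) = (if b = 1 then Some (y @ [2]) else None)"
proof (induction y arbitrary: n)
  case (Cons a y)
  have "wt (Bpow (Suc (length y))) (y @ [b]) \<noteq> (0, 0)"
    using wt_Bpow_total[of "y @ [b]"] by auto
  with Cons show ?case by auto
qed simp

lemma Bpow_cf_SomeD: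
  "length w = n \<Longrightarrow> cf (Bpow n) w = Some w' \<Longrightarrow>
     ce (Bpow n) w' = Some w \<and> eps (Bpow n) w' = eps (Bpow n) w + 1"
proof (induction w arbitrary: n w')
  case (Cons a w)
  then obtain m where n: "n = Suc m" and m: "length w = m" by auto
  show ?case
  proof (cases "phi Bq a > eps (Bpow m) w")
    case True
    with Cons.prems(2) n show ?thesis by (auto split: if_splits)
  next
    case False
    with Cons.prems(2) n obtain v where "cf (Bpow m) w = Some v" "w' = a # v"
      by (auto split: if_splits)
    with False Cons.IH[OF m] n show ?thesis by auto
  qed
qed simp

definition twos_ones :: "nat \<Rightarrow> nat \<Rightarrow> nat list" where
  "twos_ones k m = replicate k 2 @ replicate m 1"

text \<open>Not [simp]: it would unfold the words twos_ones 0 n = 1^n that start the components.\<close>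

lemma twos_ones_simps:
  "twos_ones 0 0 = []"
  "twos_ones 0 (Suc m) = 1 # twos_ones 0 m"
  "twos_ones (Suc k) m = 2 # twos_ones k m"
  by (simp_all add: twos_ones_def)

lemma Bpow_ones:
  "eps (Bpow m) (twos_ones 0 m) = 0"
  "phi (Bpow m) (twos_ones 0 m) = int m"
  "ce (Bpow m) (twos_ones 0 m) = None"
  "cf (Bpow m) (twos_ones 0 m) = (if m = 0 then None else Some (twos_ones 1 (m - 1)))"
  by (induction m) (auto simp: twos_ones_simps)

lemma Bpow_twos_ones:
  "eps (Bpow (k + m)) (twos_ones k m) = int k"
  "phi (Bpow (k + m)) (twos_ones k m) = int m"
  "ce (Bpow (k + m)) (twos_ones k m)
     = (if k = 0 then None else Some (twos_ones (k - 1) (Suc m)))"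
  "cf (Bpow (k + m)) (twos_ones k m)
     = (if m = 0 then None else Some (twos_ones (Suc k) (m - 1)))"
  by (induction k) (auto simp: twos_ones_simps Bpow_ones gr0_conv_Suc)

lemma length_twos_ones [simp]: "length (twos_ones k m) = k + m"
  by (simp add: twos_ones_def)

lemma twos_ones_in_carrier: "twos_ones k m \<in> carrier (Bpow (k + m))"
  by (auto simp: carrier_Bpow twos_ones_def)

lemma twos_ones_snoc:
  "twos_ones k m @ [1] = twos_ones k (Suc m)"
  "twos_ones k 0 @ [2] = twos_ones (Suc k) 0"
  by (simp_all add: twos_ones_def replicate_append_same)

lemma symcl_rtrancl_closed:
  assumes "(x, y) \<in> (E \<union> E\<inverse>)\<^sup>*" and "x \<in> S"
    and "\<And>a b. (a, b) \<in> E \<Longrightarrow> a \<in> S \<longleftrightarrow> b \<in> S"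
  shows "y \<in> S"
  using assms(1,2) by (induction rule: rtrancl_induct) (use assms(3) in blast)+

lemma symcl_rtrancl_classes_disjoint:
  assumes "(a, b) \<notin> (E \<union> E\<inverse>)\<^sup>*"
  shows "{x. (a, x) \<in> (E \<union> E\<inverse>)\<^sup>*} \<inter> {x. (b, x) \<in> (E \<union> E\<inverse>)\<^sup>*} = {}"
proof -
  have "sym ((E \<union> E\<inverse>)\<^sup>*)"
    by (simp add: sym_Un_converse sym_rtrancl)
  with assms show ?thesis
    by (auto dest: symD intro: rtrancl_trans)
qed

lemma gl2_comp_subset:
  assumes "x \<in> S" and "\<And>a b. (a, b) \<in> gl2_edges C \<Longrightarrow> a \<in> S \<longleftrightarrow> b \<in> S"
  shows "gl2_comp C x \<subseteq> S"
  using symcl_rtrancl_closed[where E = "gl2_edges C"] assms by (auto simp: gl2_comp_def)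

lemma q2_comp_subset:
  assumes "x \<in> S" and "\<And>a b. (a, b) \<in> q2_edges C \<Longrightarrow> a \<in> S \<longleftrightarrow> b \<in> S"
  shows "q2_comp C x \<subseteq> S"
  using symcl_rtrancl_closed[where E = "q2_edges C"] assms by (auto simp: q2_comp_def)

lemma gl2_comp_rtranclI: "(x, y) \<in> (gl2_edges C)\<^sup>* \<Longrightarrow> y \<in> gl2_comp C x"
  unfolding gl2_comp_def by (meson CollectI in_rtrancl_UnI)

lemma q2_comp_edgeI: "(x, y) \<in> q2_edges C \<Longrightarrow> y \<in> q2_comp C x"
  unfolding q2_comp_def by blast

lemma q2_comp_trans: "y \<in> q2_comp C x \<Longrightarrow> q2_comp C y \<subseteq> q2_comp C x"
  unfolding q2_comp_def by (auto intro: rtrancl_trans)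

lemma gl2_comp_subset_q2_comp: "gl2_comp C x \<subseteq> q2_comp C x"
proof -
  have "gl2_edges C \<subseteq> q2_edges C"
    by (auto simp: gl2_edges_def q2_edges_def)
  then show ?thesis
    unfolding gl2_comp_def q2_comp_def by (auto elim!: rtrancl_mono[THEN subsetD, rotated])
qed

definition kashiwara_closed :: "nat \<Rightarrow> nat list set \<Rightarrow> bool" where
  "kashiwara_closed n S \<longleftrightarrow>
     (\<forall>x \<in> S. set_option (cf (Bpow n) x) \<subseteq> S \<and> set_option (ce (Bpow n) x) \<subseteq> S)"

lemma kashiwara_closed_gl2_edge:
  assumes "kashiwara_closed n S" and "(a, b) \<in> gl2_edges (Bpow n)"
  shows "a \<in> S \<longleftrightarrow> b \<in> S"
proof -
  from assms(2) have "a \<in> carrier (Bpow n)" and cf: "cf (Bpow n) a = Some b"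
    by (auto simp: gl2_edges_def)
  then have "ce (Bpow n) b = Some a"
    using Bpow_cf_SomeD by (auto simp: carrier_Bpow)
  with cf assms(1) show ?thesis
    by (force simp: kashiwara_closed_def)
qed

definition snoc_letters :: "nat list set \<Rightarrow> nat list set" where
  "snoc_letters S = {x @ [c] | x c. x \<in> S \<and> c \<in> {1, 2}}"

lemma kashiwara_closed_snoc_letters:
  assumes "S \<subseteq> {x. length x = n}" and "kashiwara_closed n S"
  shows "kashiwara_closed (Suc n) (snoc_letters S)"
  unfolding kashiwara_closed_def
proof (intro ballI conjI)
  fix w assume "w \<in> snoc_letters S"
  then obtain x c where x: "x \<in> S" "c \<in> {1, 2}" and w: "w = x @ [c]"
    by (auto simp: snoc_letters_def)
  have "length x = n" using x(1) assms(1) by auto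
  note snoc = Bpow_snoc[OF this, of c]
  have "set_option (cf (Bpow n) x) \<subseteq> S" "set_option (ce (Bpow n) x) \<subseteq> S"
    using x(1) assms(2) by (auto simp: kashiwara_closed_def)
  then show "set_option (cf (Bpow (Suc n)) w) \<subseteq> snoc_letters S"
    and "set_option (ce (Bpow (Suc n)) w) \<subseteq> snoc_letters S"
    using x unfolding w snoc by (auto simp: snoc_letters_def)
qed

lemma snoc_letters_q2_edge:
  assumes "S \<subseteq> {x. length x = n}" and "kashiwara_closed n S"
    and "(a, b) \<in> q2_edges (Bpow (Suc n))"
  shows "a \<in> snoc_letters S \<longleftrightarrow> b \<in> snoc_letters S"
proof (cases "(a, b) \<in> gl2_edges (Bpow (Suc n))")
  case True
  then show ?thesis
    using kashiwara_closed_gl2_edge kashiwara_closed_snoc_letters[OF assms(1,2)] by blast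
next
  case False
  with assms(3) have "a \<in> carrier (Bpow (Suc n))" and "cf1 (Bpow (Suc n)) a = Some b"
    by (auto simp: q2_edges_def gl2_edges_def)
  then obtain y where "length y = n" "a = y @ [1]" "b = y @ [2]"
    by (auto simp: carrier_Bpow length_Suc_conv_rev cf1_Bpow_snoc split: if_splits)
  then show ?thesis by (auto simp: snoc_letters_def)
qed

lemma Bgl2_simps [simp]:
  "carrier Bgl2 = {1, 2}" "wt Bgl2 = wt Bq" "eps Bgl2 = eps Bq" "phi Bgl2 = phi Bq"
  "ce Bgl2 = ce Bq" "cf Bgl2 = cf Bq"
  by (simp_all add: Bgl2_def gl2crys.defs)

lemma gl2_restrict_simps [simp]:
  "carrier (gl2_restrict C S) = S"
  "wt (gl2_restrict C S) = wt C" "eps (gl2_restrict C S) = eps C" "phi (gl2_restrict C S) = phi C"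
  "ce (gl2_restrict C S) = ce C" "cf (gl2_restrict C S) = cf C"
  by (simp_all add: gl2_restrict_def gl2crys.defs)

lemma gl2_iso_snoc_letters:
  assumes "S \<subseteq> {x. length x = n}"
  shows "gl2_iso (gl2_restrict (Bpow (Suc n)) (snoc_letters S))
                 (gl2_tensor (gl2_restrict (Bpow n) S) Bgl2) (\<lambda>w. (butlast w, last w))"
  unfolding gl2_iso_def
proof (intro conjI ballI)
  show "bij_betw (\<lambda>w. (butlast w, last w))
          (carrier (gl2_restrict (Bpow (Suc n)) (snoc_letters S)))
          (carrier (gl2_tensor (gl2_restrict (Bpow n) S) Bgl2))"
    by (rule bij_betw_byWitness[where f' = "\<lambda>(x, c). x @ [c]"])
       (auto simp: snoc_letters_def gl2_tensor_def)
next
  fix w assume "w \<in> carrier (gl2_restrict (Bpow (Suc n)) (snoc_letters S))"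
  then obtain x c where "x \<in> S" and w: "w = x @ [c]"
    by (auto simp: snoc_letters_def)
  with assms have "length x = n" by auto
  note snoc = Bpow_snoc[OF this, of c]
  show "wt (gl2_tensor (gl2_restrict (Bpow n) S) Bgl2) (butlast w, last w)
      = wt (gl2_restrict (Bpow (Suc n)) (snoc_letters S)) w"
    and "eps (gl2_tensor (gl2_restrict (Bpow n) S) Bgl2) (butlast w, last w)
      = eps (gl2_restrict (Bpow (Suc n)) (snoc_letters S)) w"
    and "phi (gl2_tensor (gl2_restrict (Bpow n) S) Bgl2) (butlast w, last w)
      = phi (gl2_restrict (Bpow (Suc n)) (snoc_letters S)) w"
    and "ce (gl2_tensor (gl2_restrict (Bpow n) S) Bgl2) (butlast w, last w)
      = map_option (\<lambda>w. (butlast w, last w)) (ce (gl2_restrict (Bpow (Suc n)) (snoc_letters S)) w)"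
    and "cf (gl2_tensor (gl2_restrict (Bpow n) S) Bgl2) (butlast w, last w)
      = map_option (\<lambda>w. (butlast w, last w)) (cf (gl2_restrict (Bpow (Suc n)) (snoc_letters S)) w)"
    unfolding w by (simp_all add: snoc gl2_tensor_def option.map_comp o_def del: Bq_simps)
qed

definition ones_string :: "nat \<Rightarrow> nat list set" where
  "ones_string n = {twos_ones k (n - k) | k. k \<le> n}"

lemma twos_ones_in_ones_string: "k \<le> n \<Longrightarrow> twos_ones k (n - k) \<in> ones_string n"
  by (auto simp: ones_string_def)

lemma ones_string_length: "ones_string n \<subseteq> {x. length x = n}"
  by (auto simp: ones_string_def)

lemma kashiwara_closed_ones_string: "kashiwara_closed n (ones_string n)"
  unfolding kashiwara_closed_def
proof (intro ballI conjI)
  fix x assume "x \<in> ones_string n"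
  then obtain k where k: "k \<le> n" and x: "x = twos_ones k (n - k)"
    by (auto simp: ones_string_def)
  note twos_ones = Bpow_twos_ones[of k "n - k", unfolded le_add_diff_inverse[OF k]]
  show "set_option (cf (Bpow n) x) \<subseteq> ones_string n"
    using k unfolding x twos_ones(4) ones_string_def
    by (auto intro!: exI[of _ "Suc k"] simp: diff_Suc split: nat.splits)
  show "set_option (ce (Bpow n) x) \<subseteq> ones_string n"
    using k unfolding x twos_ones(3) ones_string_def
    by (auto intro!: exI[of _ "k - 1"] simp: Suc_diff_le)
qed

lemma ones_string_reachable:
  "k \<le> n \<Longrightarrow> (twos_ones 0 n, twos_ones k (n - k)) \<in> (gl2_edges (Bpow n))\<^sup>*"
proof (induction k)
  case (Suc k)
  have "(twos_ones k (n - k), twos_ones (Suc k) (n - Suc k)) \<in> gl2_edges (Bpow n)"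
    using Bpow_twos_ones(4)[of k "n - k"] twos_ones_in_carrier[of k "n - k"] Suc.prems
    by (simp add: gl2_edges_def diff_Suc split: nat.splits)
  with Suc show ?case by (simp add: rtrancl_into_rtrancl)
qed simp

lemma gl2_comp_ones: "gl2_comp (Bpow n) (twos_ones 0 n) = ones_string n"
proof
  show "gl2_comp (Bpow n) (twos_ones 0 n) \<subseteq> ones_string n"
    by (rule gl2_comp_subset, force simp: ones_string_def)
       (rule kashiwara_closed_gl2_edge[OF kashiwara_closed_ones_string])
  show "ones_string n \<subseteq> gl2_comp (Bpow n) (twos_ones 0 n)"
    using gl2_comp_rtranclI[OF ones_string_reachable] by (auto simp: ones_string_def)
qed

lemma snoc_two_reachable:
  "k < N \<Longrightarrow>
     (twos_ones 0 N @ [2], twos_ones k (N - k) @ [2]) \<in> (gl2_edges (Bpow (Suc N)))\<^sup>*"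
proof (induction k)
  case (Suc k)
  then have k: "k \<le> N" by simp
  note twos_ones = Bpow_twos_ones[of k "N - k", unfolded le_add_diff_inverse[OF k]]
  have "cf (Bpow (Suc N)) (twos_ones k (N - k) @ [2])
      = Some (twos_ones (Suc k) (N - Suc k) @ [2])"
    using Suc.prems by (simp add: Bpow_snoc(5) twos_ones(2,4) diff_Suc split: nat.splits)
  moreover have "twos_ones k (N - k) @ [2] \<in> carrier (Bpow (Suc N))"
    using k by (auto simp: carrier_Bpow twos_ones_def)
  ultimately show ?case
    using Suc by (auto simp: gl2_edges_def intro: rtrancl_into_rtrancl)
qed simp

lemma snoc_letters_ones_q2_edge:
  "(a, b) \<in> q2_edges (Bpow (Suc N)) \<Longrightarrow>
     a \<in> snoc_letters (ones_string N) \<longleftrightarrow> b \<in> snoc_letters (ones_string N)"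
  by (rule snoc_letters_q2_edge[OF ones_string_length kashiwara_closed_ones_string])

lemma ones_words_in_snoc_letters:
  "twos_ones 0 (Suc N) \<in> snoc_letters (ones_string N)"
  "twos_ones 0 N @ [2] \<in> snoc_letters (ones_string N)"
  using twos_ones_in_ones_string[of 0 N]
  by (auto simp: snoc_letters_def twos_ones_snoc(1)[symmetric])

lemma gl2_comp_ones_union:
  "gl2_comp (Bpow (Suc N)) (twos_ones 0 (Suc N)) \<union> gl2_comp (Bpow (Suc N)) (twos_ones 0 N @ [2])
     = snoc_letters (ones_string N)"
proof
  show "gl2_comp (Bpow (Suc N)) (twos_ones 0 (Suc N)) \<union> gl2_comp (Bpow (Suc N)) (twos_ones 0 N @ [2])
          \<subseteq> snoc_letters (ones_string N)"
    by (intro Un_least order_trans[OF gl2_comp_subset_q2_comp]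
        q2_comp_subset[OF ones_words_in_snoc_letters(1) snoc_letters_ones_q2_edge]
        q2_comp_subset[OF ones_words_in_snoc_letters(2) snoc_letters_ones_q2_edge])
next
  show "snoc_letters (ones_string N) \<subseteq>
          gl2_comp (Bpow (Suc N)) (twos_ones 0 (Suc N)) \<union> gl2_comp (Bpow (Suc N)) (twos_ones 0 N @ [2])"
  proof
    fix w assume "w \<in> snoc_letters (ones_string N)"
    then obtain k c
      where k: "k \<le> N" and c: "c \<in> {1, 2}" and w: "w = twos_ones k (N - k) @ [c]"
      by (auto simp: snoc_letters_def ones_string_def)
    consider "c = 1" | "c = 2" "k = N" | "c = 2" "k < N"
      using k c by force
    then show "w \<in> gl2_comp (Bpow (Suc N)) (twos_ones 0 (Suc N))
                  \<union> gl2_comp (Bpow (Suc N)) (twos_ones 0 N @ [2])"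
    proof cases
      case 1
      then have "w = twos_ones k (Suc N - k)"
        using k twos_ones_snoc(1)[of k "N - k"] by (simp add: w Suc_diff_le)
      then show ?thesis
        using twos_ones_in_ones_string[of k "Suc N"] k by (simp add: gl2_comp_ones)
    next
      case 2
      then have "w = twos_ones (Suc N) (Suc N - Suc N)"
        by (simp add: w twos_ones_snoc)
      then show ?thesis
        using twos_ones_in_ones_string[of "Suc N" "Suc N"] by (simp add: gl2_comp_ones)
    next
      case 3
      then show ?thesis
        using gl2_comp_rtranclI[OF snoc_two_reachable] by (simp add: w)
    qed
  qed
qed

lemma q2_comp_ones:
  "q2_comp (Bpow (Suc N)) (twos_ones 0 (Suc N)) = snoc_letters (ones_string N)"
proof
  show "q2_comp (Bpow (Suc N)) (twos_ones 0 (Suc N)) \<subseteq> snoc_letters (ones_string N)"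
    by (rule q2_comp_subset[OF ones_words_in_snoc_letters(1) snoc_letters_ones_q2_edge])
  have "(twos_ones 0 N @ [1], twos_ones 0 N @ [2]) \<in> q2_edges (Bpow (Suc N))"
    using cf1_Bpow_snoc[of "twos_ones 0 N" N 1]
    by (auto simp: q2_edges_def carrier_Bpow twos_ones_def simp del: Bpow_Suc_simps)
  then have "twos_ones 0 N @ [2] \<in> q2_comp (Bpow (Suc N)) (twos_ones 0 (Suc N))"
    unfolding twos_ones_snoc(1) by (rule q2_comp_edgeI)
  then show "snoc_letters (ones_string N) \<subseteq> q2_comp (Bpow (Suc N)) (twos_ones 0 (Suc N))"
    unfolding gl2_comp_ones_union[symmetric]
    by (intro Un_least gl2_comp_subset_q2_comp order_trans[OF gl2_comp_subset_q2_comp q2_comp_trans])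
qed

lemma gl2_comp_ones_disjoint:
  assumes "1 \<le> N"
  shows "gl2_comp (Bpow (Suc N)) (twos_ones 0 (Suc N))
           \<inter> gl2_comp (Bpow (Suc N)) (twos_ones 0 N @ [2]) = {}"
proof -
  have "twos_ones 0 N @ [2] \<noteq> twos_ones k (Suc N - k)" for k
  proof (cases "Suc N - k")
    case 0
    have "1 \<in> set (twos_ones 0 N @ [2])" "1 \<notin> set (twos_ones k 0)"
      using assms by (auto simp: twos_ones_def)
    with 0 show ?thesis by metis
  next
    case (Suc m)
    then show ?thesis by (simp add: twos_ones_snoc(1)[symmetric])
  qed
  then have "twos_ones 0 N @ [2] \<notin> gl2_comp (Bpow (Suc N)) (twos_ones 0 (Suc N))"
    by (auto simp: gl2_comp_ones ones_string_def)
  then show ?thesis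
    unfolding gl2_comp_def by (intro symcl_rtrancl_classes_disjoint) simp
qed

theorem proposition3p4:
  fixes r :: nat
  assumes "2 \<le> r"
  shows "q2_comp (Bpow r) (replicate r 1)
           = gl2_comp (Bpow r) (replicate r 1) \<union> gl2_comp (Bpow r) (replicate (r - 1) 1 @ [2])
       \<and> gl2_comp (Bpow r) (replicate r 1) \<inter> gl2_comp (Bpow r) (replicate (r - 1) 1 @ [2]) = {}
       \<and> (\<exists>\<psi>. gl2_iso (gl2_restrict (Bpow r) (q2_comp (Bpow r) (replicate r 1)))
                      (gl2_tensor (gl2_restrict (Bpow (r - 1)) (gl2_comp (Bpow (r - 1)) (replicate (r - 1) 1)))
                                  Bgl2) \<psi>)"
proof -
  obtain N where r: "r = Suc N" and N: "1 \<le> N"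
    using assms by (cases r) auto
  have ones: "replicate n 1 = twos_ones 0 n" for n
    by (simp add: twos_ones_def)
  have "q2_comp (Bpow (Suc N)) (twos_ones 0 (Suc N))
      = gl2_comp (Bpow (Suc N)) (twos_ones 0 (Suc N)) \<union> gl2_comp (Bpow (Suc N)) (twos_ones 0 N @ [2])"
    by (simp only: q2_comp_ones gl2_comp_ones_union)
  moreover have "gl2_iso (gl2_restrict (Bpow (Suc N)) (q2_comp (Bpow (Suc N)) (twos_ones 0 (Suc N))))
      (gl2_tensor (gl2_restrict (Bpow N) (gl2_comp (Bpow N) (twos_ones 0 N))) Bgl2) (\<lambda>w. (butlast w, last w))"
    unfolding q2_comp_ones gl2_comp_ones by (rule gl2_iso_snoc_letters[OF ones_string_length])
  ultimately show ?thesis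
    unfolding r diff_Suc_1 ones using gl2_comp_ones_disjoint[OF N] by blast
qed

end
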